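(* Let $n\in\mathbb{N}$ and let $f_1,\ldots,f_n$ be Alpert multiwavelets of multiplicity $n$. Then there is a nonzero real constant $\lambda$ such that, for almost every $x\in[-1,1]$, \[ f_n(x)=\lambda\bigl(A_{n,n}(x)\chi_{[-1,0)}(x)+B_{n,n}(x)\chi_{[0,1)}(x)\bigr), \] where $(A_{n,n},B_{n,n})$ is the type I Legendre–Angelesco multiple orthogonal polynomial for the multi-index $(n,n)$.
   Context: Alpert multiwavelets of multiplicity $n\in\mathbb{N}$: real functions $f_1,\ldots,f_n$ supported on $[-1,1]$ such that (i) the restriction of each $f_i$ to $(0,1)$ is a polynomial of degree at most $n-1$; (ii) $f_k(-t)=(-1)^{k+n-1}f_k(t)$ for $t\in(0,1)$; (iii) $\int_{-1}^1 f_i(t)f_j(t)\,dt=\delta_{i,j}$ for $1\le i,j\le n$; (iv) $\int_{-1}^1 f_k(t)t^i\,dt=0$ for $i=0,1,\ldots,k+n-2$. Type I Legendre–Angelesco polynomials: for integers $n,m\ge 0$ with $n+m\ge1$, $(A_{n,m},B_{n,m})$ is the unique pair of polynomials with $\deg A_{n,m}\le n-1$, $\deg B_{n,m}\le m-1$ (degree $\le -1$ meaning the zero polynomial) such that, writing $Q_{n,m}=A_{n,m}\chi_{[-1,0]}+B_{n,m}\chi_{[0,1]}$, one has $\int_{-1}^1 Q_{n,m}(x)x^k\,dx=0$ for $0\le k\le n+m-2$ and $\int_{-1}^1 Q_{n,m}(x)x^{n+m-1}\,dx=1$. *)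

theory Defs
  imports "HOL-Analysis.Analysis" "HOL-Computational_Algebra.Polynomial"
begin

definition alpert_multiwavelets :: "nat \<Rightarrow> (nat \<Rightarrow> real \<Rightarrow> real) \<Rightarrow> bool" where
  "alpert_multiwavelets n f \<longleftrightarrow>
     (\<forall>i\<in>{1..n}. \<forall>t. t \<notin> {-1..1} \<longrightarrow> f i t = 0) \<and>
     (\<forall>i\<in>{1..n}. \<exists>p :: real poly. (p = 0 \<or> degree p \<le> n - 1) \<and>
                  (\<forall>t\<in>{0<..<1}. f i t = poly p t)) \<and>
     (\<forall>k\<in>{1..n}. \<forall>t\<in>{0<..<1}. f k (-t) = (-1) ^ (k + n - 1) * f k t) \<and>
     (\<forall>i\<in>{1..n}. \<forall>j\<in>{1..n}.
        integral {-1..1} (\<lambda>t. f i t * f j t) = (if i = j then 1 else 0)) \<and>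
     (\<forall>k\<in>{1..n}. \<forall>i\<le>k + n - 2. integral {-1..1} (\<lambda>t. f k t * t ^ i) = 0)"

text \<open>Type I Legendre--Angelesco pair: deg A \<le> n-1, deg B \<le> m-1 (degree \<le> -1 means zero).\<close>
definition LA_Q :: "real poly \<Rightarrow> real poly \<Rightarrow> real \<Rightarrow> real" where
  "LA_Q A B x = poly A x * indicator {-1..0} x + poly B x * indicator {0..1} x"

definition LA_typeI :: "nat \<Rightarrow> nat \<Rightarrow> real poly \<Rightarrow> real poly \<Rightarrow> bool" where
  "LA_typeI n m A B \<longleftrightarrow>
     (A = 0 \<or> degree A < n) \<and> (B = 0 \<or> degree B < m) \<and>
     (\<forall>k. k + 2 \<le> n + m \<longrightarrow> integral {-1..1} (\<lambda>x. LA_Q A B x * x ^ k) = 0) \<and>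
     integral {-1..1} (\<lambda>x. LA_Q A B x * x ^ (n + m - 1)) = 1"

definition LA_A :: "nat \<Rightarrow> nat \<Rightarrow> real poly" where
  "LA_A n m = fst (THE AB. LA_typeI n m (fst AB) (snd AB))"

definition LA_B :: "nat \<Rightarrow> nat \<Rightarrow> real poly" where
  "LA_B n m = snd (THE AB. LA_typeI n m (fst AB) (snd AB))"

end

theory Submission imports Defs begin

text \<open>On \<open>(0,1)\<close> the wavelet \<open>f\<^sub>n\<close> is a polynomial of degree \<open>< n\<close>, and it is odd, so
  almost everywhere it equals \<open>A\<close> on \<open>[-1,0]\<close> and \<open>B\<close> on \<open>[0,1]\<close> for polynomials \<open>A, B\<close> of degree
  \<open>< n\<close>; its orthogonality relations say that the moments of order \<open>0, \<dots>, 2n - 2\<close> of this pair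
  vanish. The \<open>2n\<close> moments of such a pair are linear in its \<open>2n\<close> coefficients, and splitting
  into even and odd moments turns them into two Cauchy systems with matrix \<open>1/(i + j + 1)\<close>,
  which are nonsingular. Hence the pair is determined by its moments: the last moment \<open>\<mu>\<close> is
  nonzero (otherwise \<open>f\<^sub>n = 0\<close> a.e., contradicting \<open>\<parallel>f\<^sub>n\<parallel> = 1\<close>), and \<open>(A, B)/\<mu>\<close> is the
  unique type I Legendre--Angelesco pair of index \<open>(n, n)\<close>.\<close>

lemma cauchy_system_solution_zero:
  fixes d :: "nat \<Rightarrow> real" and kk :: "nat \<Rightarrow> nat"
  assumes inj: "inj_on kk {..<n}"
    and z: "\<And>j. j < n \<Longrightarrow> (\<Sum>i<n. d i / real (i + kk j + 1)) = 0"
    and "m < n"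
  shows "d m = 0"
proof -
  text \<open>Clearing denominators, \<open>\<Sum>\<^sub>i d\<^sub>i / (x + i + 1)\<close> becomes a polynomial \<open>P\<close> of degree
    \<open>< n\<close> vanishing at the \<open>n\<close> points \<open>kk j\<close>; so \<open>P = 0\<close>, and \<open>P(-m-1)\<close> isolates \<open>d\<^sub>m\<close>.\<close>
  define P :: "real poly" where
    "P = (\<Sum>i<n. smult (d i) (\<Prod>l\<in>{..<n}-{i}. [:real l + 1, 1:]))"
  have poly_P: "poly P x = (\<Sum>i<n. d i * (\<Prod>l\<in>{..<n}-{i}. x + real l + 1))" for x
    by (simp add: P_def poly_sum poly_prod algebra_simps)
  have "degree P \<le> n - 1"
    unfolding P_def
  proof (intro degree_sum_le)
    fix i assume i: "i \<in> {..<n}"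
    have "degree (smult (d i) (\<Prod>l\<in>{..<n}-{i}. [:real l + 1, 1:]))
          \<le> sum (degree \<circ> (\<lambda>l. [:real l + 1, 1:] :: real poly)) ({..<n}-{i})"
      by (rule order.trans[OF degree_smult_le degree_prod_sum_le]) simp
    also have "\<dots> = n - 1" using i by simp
    finally show "degree (smult (d i) (\<Prod>l\<in>{..<n}-{i}. [:real l + 1, 1:])) \<le> n - 1" .
  qed simp
  hence deg_P: "degree P < n" using \<open>m < n\<close> by linarith
  have P_root: "poly P (real (kk j)) = 0" if j: "j < n" for j
  proof -
    let ?x = "real (kk j)"
    have "poly P ?x = (\<Sum>i<n. d i / real (i + kk j + 1) * (\<Prod>l<n. ?x + real l + 1))"
      unfolding poly_P
    proof (intro sum.cong refl)
      fix i assume i: "i \<in> {..<n}"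
      have "(\<Prod>l<n. ?x + real l + 1) = (?x + real i + 1) * (\<Prod>l\<in>{..<n}-{i}. ?x + real l + 1)"
        using i by (subst prod.remove[of _ i]) auto
      moreover have "?x + real i + 1 > 0" by simp
      ultimately show "d i * (\<Prod>l\<in>{..<n}-{i}. ?x + real l + 1)
                       = d i / real (i + kk j + 1) * (\<Prod>l<n. ?x + real l + 1)"
        by (simp add: field_simps)
    qed
    also have "\<dots> = (\<Sum>i<n. d i / real (i + kk j + 1)) * (\<Prod>l<n. ?x + real l + 1)"
      by (simp add: sum_distrib_right)
    finally show ?thesis using z[OF j] by simp
  qed
  have "P = 0"
  proof (rule poly_eqI_degree[of "(\<lambda>j. real (kk j)) ` {..<n}"])
    have "card ((\<lambda>j. real (kk j)) ` {..<n}) = n"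
      using inj by (subst card_image) (auto simp: inj_on_def)
    thus "degree P < card ((\<lambda>j. real (kk j)) ` {..<n})"
      "degree 0 < card ((\<lambda>j. real (kk j)) ` {..<n})"
      using deg_P \<open>m < n\<close> by auto
  qed (use P_root in auto)
  have "poly P (- real m - 1) = d m * (\<Prod>l\<in>{..<n}-{m}. real l - real m)"
  proof -
    have "(\<Sum>i\<in>{..<n}-{m}. d i * (\<Prod>l\<in>{..<n}-{i}. real l - real m)) = 0"
      using \<open>m < n\<close> by (intro sum.neutral ballI) (auto intro!: prod_zero bexI[of _ m])
    thus ?thesis
      unfolding poly_P using \<open>m < n\<close> by (subst sum.remove[of _ m]) auto
  qed
  moreover have "(\<Prod>l\<in>{..<n}-{m}. real l - real m) \<noteq> 0"
    by (subst prod_zero_iff) auto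
  ultimately show ?thesis using \<open>P = 0\<close> by simp
qed

text \<open>Closed form of \<open>\<integral>\<^sub>-\<^sub>1\<^sup>1 LA_Q A B x \<cdot> x\<^sup>k dx\<close>, valid only when \<open>A\<close> and \<open>B\<close> have degree \<open>< n\<close>.\<close>
definition LA_moment :: "nat \<Rightarrow> real poly \<Rightarrow> real poly \<Rightarrow> nat \<Rightarrow> real" where
  "LA_moment n A B k = (\<Sum>i<n. (coeff A i * (-1) ^ (i + k) + coeff B i) / real (i + k + 1))"

lemma LA_moment_diff:
  "LA_moment n (A - A') (B - B') k = LA_moment n A B k - LA_moment n A' B' k"
  by (simp add: LA_moment_def sum_subtractf[symmetric] diff_divide_distrib[symmetric] algebra_simps)

lemma LA_moment_smult: "LA_moment n (smult c A) (smult c B) k = c * LA_moment n A B k"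
  by (simp add: LA_moment_def sum_distrib_left algebra_simps)

lemma LA_Q_smult: "LA_Q (smult c A) (smult c B) x = c * LA_Q A B x"
  by (simp add: LA_Q_def algebra_simps)

lemma power_has_integral_Icc:
  fixes a b :: real
  assumes "a \<le> b"
  shows "((\<lambda>x. x ^ m) has_integral (b ^ (m + 1) - a ^ (m + 1)) / real (m + 1)) {a..b}"
proof -
  have "((\<lambda>x. x ^ m) has_integral b ^ (m + 1) / real (m + 1) - a ^ (m + 1) / real (m + 1)) {a..b}"
  proof (rule fundamental_theorem_of_calculus[OF assms])
    fix x :: real
    have "((\<lambda>x. x ^ (m + 1) / real (m + 1)) has_real_derivative x ^ m) (at x)"
      using DERIV_cdivide[OF DERIV_pow[of "m + 1" x], of "real (m + 1)"] by simp
    thus "((\<lambda>x. x ^ (m + 1) / real (m + 1)) has_vector_derivative x ^ m) (at x within {a..b})"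
      by (simp add: has_real_derivative_iff_has_vector_derivative[symmetric] has_field_derivative_at_within)
  qed
  thus ?thesis by (simp add: diff_divide_distrib)
qed

lemma poly_eq_sum_lessThan:
  assumes "degree (q :: 'a :: comm_semiring_1 poly) < n"
  shows "poly q x = (\<Sum>i<n. coeff q i * x ^ i)"
proof -
  have "poly q x = (\<Sum>i\<le>degree q. coeff q i * x ^ i)" by (simp add: poly_altdef)
  also have "\<dots> = (\<Sum>i<n. coeff q i * x ^ i)"
    using assms by (intro sum.mono_neutral_left) (auto simp: coeff_eq_0)
  finally show ?thesis .
qed

lemma poly_times_power_has_integral_Icc:
  fixes q :: "real poly" and a b :: real
  assumes "degree q < n" "a \<le> b"
  shows "((\<lambda>x. poly q x * x ^ k) has_integral
           (\<Sum>i<n. coeff q i * (b ^ (i + k + 1) - a ^ (i + k + 1)) / real (i + k + 1))) {a..b}"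
proof -
  have "(\<lambda>x. poly q x * x ^ k) = (\<lambda>x. \<Sum>i<n. coeff q i * x ^ (i + k))"
    by (auto simp: poly_eq_sum_lessThan[OF assms(1)] sum_distrib_right power_add mult.assoc)
  moreover have "((\<lambda>x. \<Sum>i<n. coeff q i * x ^ (i + k)) has_integral
      (\<Sum>i<n. coeff q i * ((b ^ (i + k + 1) - a ^ (i + k + 1)) / real (i + k + 1)))) {a..b}"
    by (intro has_integral_sum has_integral_mult_right power_has_integral_Icc assms) auto
  ultimately show ?thesis by simp
qed

lemma LA_Q_moment_has_integral:
  assumes dA: "degree A < n" and dB: "degree B < n"
  shows "((\<lambda>x. LA_Q A B x * x ^ k) has_integral LA_moment n A B k) {-1..1}"
proof -
  have poly_A: "((\<lambda>x. poly A x * x ^ k) has_integral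
                   (\<Sum>i<n. coeff A i * (-1) ^ (i + k) / real (i + k + 1))) {-1..0}"
    using poly_times_power_has_integral_Icc[OF dA, of "-1" 0 k] by simp
  have left: "((\<lambda>x. LA_Q A B x * x ^ k) has_integral
                 (\<Sum>i<n. coeff A i * (-1) ^ (i + k) / real (i + k + 1))) {-1..0}"
    by (rule has_integral_spike_finite[OF _ _ poly_A, of "{0}"]) (auto simp: LA_Q_def)
  have poly_B: "((\<lambda>x. poly B x * x ^ k) has_integral (\<Sum>i<n. coeff B i / real (i + k + 1))) {0..1}"
    using poly_times_power_has_integral_Icc[OF dB, of 0 1 k] by simp
  have right: "((\<lambda>x. LA_Q A B x * x ^ k) has_integral (\<Sum>i<n. coeff B i / real (i + k + 1))) {0..1}"
    by (rule has_integral_spike_finite[OF _ _ poly_B, of "{0}"]) (auto simp: LA_Q_def)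
  from has_integral_combine[OF _ _ left right] show ?thesis
    by (simp add: LA_moment_def sum.distrib[symmetric] add_divide_distrib)
qed

lemma LA_moments_zero_imp_zero:
  assumes dA: "degree A < n" and dB: "degree B < n"
    and z: "\<And>k. k < 2 * n \<Longrightarrow> LA_moment n A B k = 0"
  shows "A = 0" "B = 0"
proof -
  have even: "coeff A i * (-1) ^ i + coeff B i = 0" if "i < n" for i
  proof (rule cauchy_system_solution_zero[of "\<lambda>j. 2 * j" n _ i])
    fix j assume "j < n"
    hence "LA_moment n A B (2 * j) = 0" using z by auto
    thus "(\<Sum>i<n. (coeff A i * (-1) ^ i + coeff B i) / real (i + 2 * j + 1)) = 0"
      by (simp add: LA_moment_def power_add)
  qed (use that in \<open>auto simp: inj_on_def\<close>)
  have odd: "coeff B i - coeff A i * (-1) ^ i = 0" if "i < n" for i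
  proof (rule cauchy_system_solution_zero[of "\<lambda>j. 2 * j + 1" n _ i])
    fix j assume "j < n"
    hence "LA_moment n A B (2 * j + 1) = 0" using z by auto
    thus "(\<Sum>i<n. (coeff B i - coeff A i * (-1) ^ i) / real (i + (2 * j + 1) + 1)) = 0"
      by (simp add: LA_moment_def power_add)
  qed (use that in \<open>auto simp: inj_on_def\<close>)
  have "coeff A i = 0 \<and> coeff B i = 0" for i
  proof (cases "i < n")
    case True
    with even[OF True] odd[OF True] show ?thesis by simp
  qed (use dA dB in \<open>auto simp: coeff_eq_0\<close>)
  thus "A = 0" "B = 0" by (auto intro: poly_eqI)
qed

lemma LA_typeI_diagonal_iff:
  assumes "n \<ge> 1"
  shows "LA_typeI n n A B \<longleftrightarrow> degree A < n \<and> degree B < n \<and>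
     (\<forall>k. k + 2 \<le> 2 * n \<longrightarrow> LA_moment n A B k = 0) \<and> LA_moment n A B (2 * n - 1) = 1"
proof -
  have deg_iff: "(p = 0 \<or> degree p < n) \<longleftrightarrow> degree p < n" for p :: "real poly"
    using assms by auto
  show ?thesis
  proof (cases "degree A < n \<and> degree B < n")
    case True
    hence "integral {-1..1} (\<lambda>x. LA_Q A B x * x ^ k) = LA_moment n A B k" for k
      using LA_Q_moment_has_integral by (intro integral_unique) auto
    thus ?thesis unfolding LA_typeI_def deg_iff using True by (simp add: mult_2)
  qed (auto simp: LA_typeI_def deg_iff)
qed

lemma LA_typeI_diagonal_unique:
  assumes "n \<ge> 1" "LA_typeI n n A B" "LA_typeI n n A' B'"
  shows "A = A'" "B = B'"
proof -
  note typeI = assms(2,3)[unfolded LA_typeI_diagonal_iff[OF assms(1)]]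
  have deg: "degree (A - A') < n" "degree (B - B') < n"
    using typeI by (auto intro: le_less_trans[OF degree_diff_le_max])
  have "LA_moment n (A - A') (B - B') k = 0" if "k < 2 * n" for k
  proof -
    from that have "k + 2 \<le> 2 * n \<or> k = 2 * n - 1" by auto
    thus ?thesis using typeI by (auto simp: LA_moment_diff)
  qed
  from LA_moments_zero_imp_zero[OF deg this]
  show "A = A'" "B = B'" by simp_all
qed

lemma LA_A_LA_B_eqI:
  assumes "n \<ge> 1" "LA_typeI n n A B"
  shows "LA_A n n = A" "LA_B n n = B"
proof -
  have "(THE AB. LA_typeI n n (fst AB) (snd AB)) = (A, B)"
  proof (rule the_equality)
    fix AB assume "LA_typeI n n (fst AB) (snd AB)"
    from LA_typeI_diagonal_unique[OF assms(1) this assms(2)] show "AB = (A, B)"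
      by (cases AB) auto
  qed (use assms(2) in simp)
  thus "LA_A n n = A" "LA_B n n = B" by (simp_all add: LA_A_def LA_B_def)
qed

lemma LA_A_LA_B_rescale:
  assumes "n \<ge> 1" "degree A < n" "degree B < n"
    and low: "\<And>k. k + 2 \<le> 2 * n \<Longrightarrow> LA_moment n A B k = 0"
    and nonzero: "A \<noteq> 0 \<or> B \<noteq> 0"
  defines "\<mu> \<equiv> LA_moment n A B (2 * n - 1)"
  shows "\<mu> \<noteq> 0" "LA_A n n = smult (1 / \<mu>) A" "LA_B n n = smult (1 / \<mu>) B"
proof -
  show "\<mu> \<noteq> 0"
  proof
    assume "\<mu> = 0"
    have "LA_moment n A B k = 0" if "k < 2 * n" for k
    proof -
      from that have "k + 2 \<le> 2 * n \<or> k = 2 * n - 1" by auto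
      thus ?thesis using low \<open>\<mu> = 0\<close> unfolding \<mu>_def by auto
    qed
    with LA_moments_zero_imp_zero[OF assms(2,3)] nonzero show False by blast
  qed
  moreover have "LA_moment n A B (2 * n - 1) = \<mu>" by (simp add: \<mu>_def)
  ultimately have "LA_typeI n n (smult (1 / \<mu>) A) (smult (1 / \<mu>) B)"
    using assms(1-3) low
    by (simp add: LA_typeI_diagonal_iff LA_moment_smult le_less_trans[OF degree_smult_le])
  from LA_A_LA_B_eqI[OF assms(1) this]
  show "LA_A n n = smult (1 / \<mu>) A" "LA_B n n = smult (1 / \<mu>) B" .
qed

lemma AE_LA_Q_eq_half_open:
  "AE x in lborel. LA_Q A B x = poly A x * indicator {-1..<0} x + poly B x * indicator {0..<1} x"
  using AE_lborel_singleton[of "0::real"] AE_lborel_singleton[of "1::real"]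
proof eventually_elim
  case (elim x)
  thus ?case by (cases "x < 0") (simp_all add: LA_Q_def indicator_def)
qed

lemma alpert_multiwavelet_last_eq_LA_Q:
  assumes "n \<ge> 1" "alpert_multiwavelets n f"
  obtains A B where "degree A < n" "degree B < n"
    "\<And>x. x \<in> {-1..1} - {-1, 0, 1} \<Longrightarrow> f n x = LA_Q A B x"
proof -
  have n: "n \<in> {1..n}" using assms(1) by simp
  obtain p :: "real poly" where "p = 0 \<or> degree p \<le> n - 1"
    and f_pos: "\<And>t. t \<in> {0<..<1} \<Longrightarrow> f n t = poly p t"
    using assms(2) n unfolding alpert_multiwavelets_def by meson
  hence deg_p: "degree p < n" using assms(1) by auto
  have "n + n - 1 = Suc (2 * (n - 1))" using assms(1) by simp
  hence "(-1::real) ^ (n + n - 1) = -1" by (simp add: power_mult)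
  hence f_odd: "f n (-t) = - f n t" if "t \<in> {0<..<1}" for t
    using assms(2) n that unfolding alpert_multiwavelets_def by simp
  define A where "A = - pcompose p [:0, -1:]"
  have "degree A < n" using deg_p by (simp add: A_def degree_pcompose)
  moreover have "f n x = LA_Q A p x" if "x \<in> {-1..1} - {-1, 0, 1}" for x
  proof (cases "x > 0")
    case False
    with that have "-x \<in> {0<..<1}" by auto
    from f_odd[OF this] f_pos[OF this] False that show ?thesis
      by (auto simp: LA_Q_def A_def poly_pcompose)
  qed (use that f_pos in \<open>auto simp: LA_Q_def\<close>)
  ultimately show ?thesis using that deg_p by blast
qed

lemma alpert_multiwavelet_last_LA_pair:
  assumes "n \<ge> 1" "alpert_multiwavelets n f"
  obtains A B where "degree A < n" "degree B < n"
    "\<And>x. x \<in> {-1..1} - {-1, 0, 1} \<Longrightarrow> f n x = LA_Q A B x"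
    "\<And>k. k + 2 \<le> 2 * n \<Longrightarrow> LA_moment n A B k = 0"
    "A \<noteq> 0 \<or> B \<noteq> 0"
proof -
  have n: "n \<in> {1..n}" using assms(1) by simp
  obtain A B where deg: "degree A < n" "degree B < n"
    and f_eq: "\<And>x. x \<in> {-1..1} - {-1, 0, 1} \<Longrightarrow> f n x = LA_Q A B x"
    using alpert_multiwavelet_last_eq_LA_Q[OF assms] by blast
  have integral_f: "integral {-1..1} (\<lambda>t. f n t * g t) = integral {-1..1} (\<lambda>t. LA_Q A B t * g t)"
    for g by (rule integral_spike[of "{-1, 0, 1}"]) (auto simp: f_eq)
  have "LA_moment n A B k = 0" if "k + 2 \<le> 2 * n" for k
    using assms(2) n that integral_f[of "\<lambda>t. t ^ k"]
      integral_unique[OF LA_Q_moment_has_integral[OF deg]]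
    unfolding alpert_multiwavelets_def by (simp add: mult_2)
  moreover have "A \<noteq> 0 \<or> B \<noteq> 0"
  proof (rule ccontr)
    assume "\<not> (A \<noteq> 0 \<or> B \<noteq> 0)"
    hence "integral {-1..1} (\<lambda>t. f n t * f n t) = 0"
      using integral_f[of "f n"] by (simp add: LA_Q_def)
    with assms(2) n show False unfolding alpert_multiwavelets_def by simp
  qed
  ultimately show ?thesis using that deg f_eq by blast
qed

theorem proposition1:
  fixes n :: nat and f :: "nat \<Rightarrow> real \<Rightarrow> real"
  assumes "n \<ge> 1"
    and "alpert_multiwavelets n f"
  shows "\<exists>c::real. c \<noteq> 0 \<and>
           (AE x in lborel. x \<in> {-1..1} \<longrightarrow>
              f n x = c * (poly (LA_A n n) x * indicator {-1..<0} x
                           + poly (LA_B n n) x * indicator {0..<1} x))"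
proof -
  obtain A B where deg: "degree A < n" "degree B < n"
    and f_eq: "\<And>x. x \<in> {-1..1} - {-1, 0, 1} \<Longrightarrow> f n x = LA_Q A B x"
    and low: "\<And>k. k + 2 \<le> 2 * n \<Longrightarrow> LA_moment n A B k = 0"
    and nonzero: "A \<noteq> 0 \<or> B \<noteq> 0"
    using alpert_multiwavelet_last_LA_pair[OF assms] by blast
  obtain \<mu> where "\<mu> \<noteq> 0" and LA_A: "LA_A n n = smult (1 / \<mu>) A"
    and LA_B: "LA_B n n = smult (1 / \<mu>) B"
    using LA_A_LA_B_rescale[OF assms(1) deg low nonzero] by blast
  have "AE x in lborel. x \<in> {-1..1} \<longrightarrow>
          f n x = \<mu> * (poly (LA_A n n) x * indicator {-1..<0} x
                      + poly (LA_B n n) x * indicator {0..<1} x)"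
    using AE_LA_Q_eq_half_open[of "LA_A n n" "LA_B n n"] AE_lborel_singleton[of "-1::real"]
      AE_lborel_singleton[of "0::real"] AE_lborel_singleton[of "1::real"]
  proof eventually_elim
    case (elim x)
    show ?case
    proof
      assume "x \<in> {-1..1}"
      with elim have "f n x = LA_Q A B x" by (intro f_eq) auto
      also have "\<dots> = \<mu> * LA_Q (LA_A n n) (LA_B n n) x"
        using \<open>\<mu> \<noteq> 0\<close> by (simp add: LA_A LA_B LA_Q_smult)
      finally show "f n x = \<mu> * (poly (LA_A n n) x * indicator {-1..<0} x
                                  + poly (LA_B n n) x * indicator {0..<1} x)"
        using elim(1) by simp
    qed
  qed
  with \<open>\<mu> \<noteq> 0\<close> show ?thesis by blast
qed

end
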